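(* Assume $n\ge2$ and $F_\infty\ne0$. Then $F$ has exactly $n-1$ zeros, located as follows. - Exactly $n-2$ of them lie strictly between consecutive singularities of $F$ (the zeros of $g$), one in each such open interval. - The remaining zero lies to the left of the smallest zero of $g$ if $F_\infty>0$, and to the right of the largest zero of $g$ if $F_\infty<0$.
   Context: Data: an integer $N\ge 2$, reals $x_A<x_B$, $R=x_B-x_A$, and bins $i=1,\dots,N$ with widths $\Delta x_i>0$ and centers $x_i$ that tile $[x_A,x_B]$ contiguously in increasing order, so that $x_1-x_A=\Delta x_1/2$, $x_N-x_A=R-\Delta x_N/2$ and $0<x_1-x_A<\dots<x_N-x_A<R$. The counts are $y_i\in\{0,1,2,\dots\}$, $M=\sum_i y_i$, and $n$ is the number of indices with $y_i\ge1$. Write $d_i=x_i-x_A$. Define $$g(a)=\sum_{i=1}^N y_i\frac{d_i}{1+a d_i}$$ for $a\notin\{-1/d_i: y_i\ge 1\}$; these excluded points are the poles of $g$. Define $$F(a)=1+\frac R2\Big(a-\frac{M}{g(a)}\Big)$$ wherever $g(a)$ is finite and nonzero. At poles of $g$, $F$ is extended by continuity as $F(a)=1+aR/2$. The zeros of $g$ are the singularities of $F$. Finally, $$F_\infty=1-\frac{R}{2M}\sum_i \frac{y_i}{d_i}.$$ *)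

theory Defs
  imports Complex_Main
begin

text \<open>Bins are indexed by 1..N; d i = x_i - x_A is the offset of the i-th bin centre.\<close>

definition Mtot :: "nat \<Rightarrow> (nat \<Rightarrow> nat) \<Rightarrow> real" where
  "Mtot N y = (\<Sum>i=1..N. real (y i))"

definition ncount :: "nat \<Rightarrow> (nat \<Rightarrow> nat) \<Rightarrow> nat" where
  "ncount N y = card {i\<in>{1..N}. y i \<ge> 1}"

text \<open>g(a); only meaningful away from its poles.\<close>
definition gfun :: "nat \<Rightarrow> (nat \<Rightarrow> real) \<Rightarrow> (nat \<Rightarrow> nat) \<Rightarrow> real \<Rightarrow> real" where
  "gfun N d y a = (\<Sum>i=1..N. real (y i) * d i / (1 + a * d i))"

definition is_pole :: "nat \<Rightarrow> (nat \<Rightarrow> real) \<Rightarrow> (nat \<Rightarrow> nat) \<Rightarrow> real \<Rightarrow> bool" where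
  "is_pole N d y a \<longleftrightarrow> (\<exists>i\<in>{1..N}. y i \<ge> 1 \<and> a = - 1 / d i)"

text \<open>F(a), extended by continuity at the poles of g as 1 + aR/2.\<close>
definition Ffun :: "real \<Rightarrow> nat \<Rightarrow> (nat \<Rightarrow> real) \<Rightarrow> (nat \<Rightarrow> nat) \<Rightarrow> real \<Rightarrow> real" where
  "Ffun R N d y a = (if is_pole N d y a then 1 + a * R / 2
                     else 1 + R / 2 * (a - Mtot N y / gfun N d y a))"

definition F_dom :: "nat \<Rightarrow> (nat \<Rightarrow> real) \<Rightarrow> (nat \<Rightarrow> nat) \<Rightarrow> real \<Rightarrow> bool" where
  "F_dom N d y a \<longleftrightarrow> is_pole N d y a \<or> gfun N d y a \<noteq> 0"

definition g_zeros :: "nat \<Rightarrow> (nat \<Rightarrow> real) \<Rightarrow> (nat \<Rightarrow> nat) \<Rightarrow> real set" where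
  "g_zeros N d y = {a. \<not> is_pole N d y a \<and> gfun N d y a = 0}"

definition F_zeros :: "real \<Rightarrow> nat \<Rightarrow> (nat \<Rightarrow> real) \<Rightarrow> (nat \<Rightarrow> nat) \<Rightarrow> real set" where
  "F_zeros R N d y = {a. F_dom N d y a \<and> Ffun R N d y a = 0}"

definition F_inf :: "real \<Rightarrow> nat \<Rightarrow> (nat \<Rightarrow> real) \<Rightarrow> (nat \<Rightarrow> nat) \<Rightarrow> real" where
  "F_inf R N d y = 1 - R / (2 * Mtot N y) * (\<Sum>i=1..N. real (y i) / d i)"

end

theory Submission
  imports Defs "HOL-Computational_Algebra.Polynomial"
begin

(*
  List the occupied bins increasingly; then the poles q_k = -1/d_i of g increase with k and
  g(a) = Sum_k Y_k / (a - q_k) with weights Y_k = y_i > 0. Multiplying by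
  Q(a) = Prod_k (a - q_k) turns g into a polynomial G of degree n - 1 whose value at q_k has
  sign (-1)^(n-1-k), so g has exactly one zero z_k in each gap (q_k, q_(k+1)) and no other.
  Likewise F = 0 becomes P = 0 for P(a) = (a + 2/R) G(a) - M Q(a), a polynomial of degree at
  most n - 1 whose coefficient of a^(n-1) is (2M/R) F_inf. At the zeros of g we have P = -M Q,
  which alternates in sign, so F vanishes between consecutive z_k; the sign of F_inf decides
  whether P has one more sign change left of z_0 or right of z_(n-2). Its degree leaves no
  room for further zeros.
*)

lemma neg_one_power_card_prod_pos:
  fixes f :: "nat \<Rightarrow> real"
  assumes "finite A" "\<And>j. j \<in> A \<Longrightarrow> j \<le> r \<Longrightarrow> 0 < f j" "\<And>j. j \<in> A \<Longrightarrow> r < j \<Longrightarrow> f j < 0"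
  shows "0 < (-1) ^ card {j\<in>A. r < j} * prod f A"
proof -
  let ?B = "{j\<in>A. j \<le> r}" and ?C = "{j\<in>A. r < j}"
  have "A = ?B \<union> ?C" by auto
  then have "prod f A = prod f ?B * prod f ?C"
    using assms(1) by (metis (no_types, lifting) prod.union_disjoint disjoint_iff finite_Un mem_Collect_eq not_le)
  then have "(-1) ^ card ?C * prod f A = prod f ?B * ((-1) ^ card ?C * prod f ?C)"
    by (simp only: ac_simps)
  also have "\<dots> = prod f ?B * (\<Prod>j\<in>?C. - f j)"
    by (simp only: prod_uminus)
  also have "0 < \<dots>"
    using assms(2,3) by (auto intro!: prod_pos mult_pos_pos)
  finally show ?thesis .
qed

lemma opposite_signs_mult_neg:
  fixes u v :: real
  assumes "0 < (-1) ^ e * u" "(-1) ^ e * v < 0"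
  shows "u * v < 0"
  using assms by (cases "even e") (auto simp: mult_neg_pos mult_pos_neg)

lemma increasing_less:
  fixes z :: "nat \<Rightarrow> 'a :: order"
  assumes z: "\<And>k. Suc k < K \<Longrightarrow> z k < z (Suc k)" and "i < j" "j < K"
  shows "z i < z j"
  using assms(2,3)
proof (induction j)
  case (Suc j)
  then show ?case using z[of j] by (cases "i = j") (auto intro: less_trans)
qed simp

lemma increasing_le:
  fixes z :: "nat \<Rightarrow> 'a :: order"
  assumes "\<And>k. Suc k < K \<Longrightarrow> z k < z (Suc k)" "i \<le> j" "j < K"
  shows "z i \<le> z j"
  using increasing_less[of K z i j, OF assms(1)] assms(2,3) by (cases "i = j") auto

lemma interlaced_increasing:
  fixes t z :: "nat \<Rightarrow> 'a :: order"
  assumes "\<And>k. Suc k < K \<Longrightarrow> t k < z k \<and> z k < t (Suc k)" "Suc k < K - 1"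
  shows "z k < z (Suc k)"
proof -
  have "Suc k < K" "Suc (Suc k) < K" using assms(2) by auto
  then have "z k < t (Suc k)" "t (Suc k) < z (Suc k)" using assms(1) by blast+
  then show ?thesis by (rule less_trans)
qed

lemma gaps_disjoint:
  fixes t :: "nat \<Rightarrow> 'a :: linorder"
  assumes t: "\<And>k. k < m \<Longrightarrow> t k < t (Suc k)" and "k < m" "l < m" "k \<noteq> l"
  shows "{t k<..<t (Suc k)} \<inter> {t l<..<t (Suc l)} = {}"
proof -
  have *: "{t i<..<t (Suc i)} \<inter> {t j<..<t (Suc j)} = {}" if "i < j" "j < m" for i j
  proof -
    have "t (Suc i) \<le> t j"
      using increasing_le[of "Suc m" t "Suc i" j] t that by simp
    then show ?thesis by auto
  qed
  show ?thesis
  proof (cases "k < l")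
    case True
    then show ?thesis using *[of k l] assms(3) by blast
  next
    case False
    then show ?thesis using *[of l k] assms(2,4) by auto
  qed
qed

lemma card_le_disjoint_nonempty_subsets:
  assumes fin: "finite X" and card: "card X \<le> m"
    and sub: "\<And>k. k < m \<Longrightarrow> C k \<subseteq> X" and ne: "\<And>k. k < m \<Longrightarrow> C k \<noteq> {}"
    and disj: "\<And>k l. k < m \<Longrightarrow> l < m \<Longrightarrow> k \<noteq> l \<Longrightarrow> C k \<inter> C l = {}"
  shows "X = (\<Union>k<m. C k)" "\<And>k. k < m \<Longrightarrow> card (C k) = 1" "card X = m"
proof -
  define x where "x k = (SOME v. v \<in> C k)" for k
  have x: "x k \<in> C k" if "k < m" for k
    using ne[OF that] unfolding x_def by (simp add: some_in_eq)
  have x_notin: "x l \<notin> C k" if "k < m" "l < m" "l \<noteq> k" for k l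
    using x[OF that(2)] disj[OF that(1,2)] that(3) by auto
  have inj: "inj_on x {..<m}"
    by (rule inj_onI) (use x_notin x in fastforce)
  have "x ` {..<m} \<subseteq> X" using x sub by blast
  moreover have "card X \<le> card (x ` {..<m})" using inj card by (simp add: card_image)
  ultimately have X: "x ` {..<m} = X" using card_seteq[OF fin] by blast
  have C: "C k = {x k}" if k: "k < m" for k
  proof
    show "C k \<subseteq> {x k}"
    proof
      fix v assume "v \<in> C k"
      then obtain l where "l < m" "v = x l" using sub[OF k] X by blast
      then show "v \<in> {x k}" using x_notin[OF k] \<open>v \<in> C k\<close> by blast
    qed
  qed (use x[OF k] in blast)
  show "X = (\<Union>k<m. C k)" using X C by auto
  show "card (C k) = 1" if "k < m" for k using C[OF that] by simp
  show "card X = m" using X inj by (auto simp: card_image)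
qed

lemma poly_roots_interlace:
  fixes p :: "real poly" and t :: "nat \<Rightarrow> real"
  assumes "0 < m" "degree p \<le> m"
    and t: "\<And>k. k < m \<Longrightarrow> t k < t (Suc k)"
    and sign_change: "\<And>k. k < m \<Longrightarrow> poly p (t k) * poly p (t (Suc k)) < 0"
  obtains z where "{x. poly p x = 0} = z ` {..<m}" "\<And>k. k < m \<Longrightarrow> t k < z k \<and> z k < t (Suc k)"
proof -
  let ?X = "{x. poly p x = 0}"
  define C where "C k = ?X \<inter> {t k<..<t (Suc k)}" for k
  have "p \<noteq> 0" using sign_change[OF assms(1)] by auto
  then have fin: "finite ?X" and card: "card ?X \<le> m"
    using poly_roots_finite card_poly_roots_bound[of p] assms(2) by auto
  have gap: "C k \<noteq> {}" if "k < m" for k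
    using poly_IVT[OF t[OF that] sign_change[OF that]] by (auto simp: C_def)
  have disj: "C k \<inter> C l = {}" if "k < m" "l < m" "k \<noteq> l" for k l
    using gaps_disjoint[of m t k l] t that by (auto simp: C_def)
  have sub: "C k \<subseteq> ?X" for k by (simp add: C_def)
  have union: "?X = (\<Union>k<m. C k)"
    by (rule card_le_disjoint_nonempty_subsets(1)[OF fin card sub]) (use gap disj in auto)
  have one: "card (C k) = 1" if "k < m" for k
    by (rule card_le_disjoint_nonempty_subsets(2)[OF fin card sub]) (use gap disj that in auto)
  define z where "z k = the_elem (C k)" for k
  have z: "C k = {z k}" if k: "k < m" for k
  proof -
    obtain v where "C k = {v}" using one[OF k] by (rule card_1_singletonE)
    then show ?thesis by (simp add: z_def)
  qed
  show ?thesis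
  proof
    have "(\<Union>k<m. C k) = z ` {..<m}" using z by auto
    with union show "?X = z ` {..<m}" by simp
    show "t k < z k \<and> z k < t (Suc k)" if "k < m" for k
      using z[OF that] by (auto simp: C_def)
  qed
qed

lemma Min_Max_image_increasing:
  fixes z :: "nat \<Rightarrow> 'a :: linorder"
  assumes z: "\<And>k. Suc k < K \<Longrightarrow> z k < z (Suc k)" and "0 < K"
  shows "Min (z ` {..<K}) = z 0" "Max (z ` {..<K}) = z (K - 1)"
  using assms increasing_le[of K z, OF z] by (auto intro!: Min_eqI Max_eqI)

lemma adjacent_in_image_increasing:
  fixes z :: "nat \<Rightarrow> 'a :: linorder"
  assumes z: "\<And>k. Suc k < K \<Longrightarrow> z k < z (Suc k)"
    and "s \<in> z ` {..<K}" "t \<in> z ` {..<K}" "s < t" and none_between: "\<forall>u\<in>z ` {..<K}. \<not> (s < u \<and> u < t)"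
  obtains k where "Suc k < K" "s = z k" "t = z (Suc k)"
proof -
  obtain i j where ij: "i < K" "j < K" "s = z i" "t = z j" using assms(2,3) by blast
  have "i < j" using increasing_le[of K z, OF z, of j i] ij \<open>s < t\<close> by (cases "i < j") auto
  moreover have "\<not> Suc i < j"
  proof
    assume "Suc i < j"
    then have "s < z (Suc i)" "z (Suc i) < t"
      using increasing_less[of K z, OF z] ij by auto
    then show False using none_between \<open>Suc i < j\<close> ij(2) by auto
  qed
  ultimately show ?thesis using that ij by (metis Suc_lessI)
qed

lemma card_one_per_gap_and_outside:
  fixes X E :: "'a :: linorder set" and z :: "nat \<Rightarrow> 'a"
  assumes fin: "finite X" and card: "card X \<le> K"
    and z: "\<And>k. Suc k < K \<Longrightarrow> z k < z (Suc k)"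
    and gaps: "\<And>k. Suc k < K \<Longrightarrow> X \<inter> {z k<..<z (Suc k)} \<noteq> {}"
    and outer: "X \<inter> E \<noteq> {}" "E \<inter> {z 0..z (K - 1)} = {}"
  shows "card X = K" "card (X \<inter> E) = 1" "X \<subseteq> E \<union> {z 0<..<z (K - 1)}"
    "\<And>k. Suc k < K \<Longrightarrow> card (X \<inter> {z k<..<z (Suc k)}) = 1"
    "card (X \<inter> {z 0<..<z (K - 1)}) = K - 1"
proof -
  have "0 < K" using outer(1) card fin by (auto simp: card_gt_0_iff)
  have gap_sub: "{z k<..<z (Suc k)} \<subseteq> {z 0<..<z (K - 1)}" if "Suc k < K" for k
  proof -
    have "z 0 \<le> z k" "z (Suc k) \<le> z (K - 1)"
      using increasing_le[of K z, OF z, of 0 k] increasing_le[of K z, OF z, of "Suc k" "K - 1"] that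
      by auto
    then show ?thesis by (auto intro: le_less_trans less_le_trans)
  qed
  define C where "C = (\<lambda>k. X \<inter> {z k<..<z (Suc k)})(K - 1 := X \<inter> E)"
  have C_mid: "C k = X \<inter> {z k<..<z (Suc k)}" if "Suc k < K" for k
  proof -
    have "k \<noteq> K - 1" using that by simp
    then show ?thesis by (simp add: C_def)
  qed
  have C_out: "C (K - 1) = X \<inter> E" by (simp add: C_def)
  have sub: "C k \<subseteq> X" for k by (simp add: C_def)
  have ne: "C k \<noteq> {}" if "k < K" for k
    using gaps[of k] outer(1) that by (cases "Suc k < K") (auto simp: C_def)
  have disj: "C k \<inter> C l = {}" if kl: "k < K" "l < K" "k \<noteq> l" for k l
  proof (cases "Suc k < K \<and> Suc l < K")
    case True
    have "{z k<..<z (Suc k)} \<inter> {z l<..<z (Suc l)} = {}"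
      by (rule gaps_disjoint[of "K - 1" z k l]) (use z True kl in auto)
    then show ?thesis using True by (auto simp: C_mid)
  next
    case False
    have mid_out: "C j \<inter> C (K - 1) = {}" if "Suc j < K" for j
    proof -
      have "C j \<subseteq> {z 0<..<z (K - 1)}" using gap_sub[OF that] C_mid[OF that] by auto
      also have "\<dots> \<subseteq> {z 0..z (K - 1)}" by auto
      finally show ?thesis using outer(2) C_out by auto
    qed
    consider "Suc k < K" "l = K - 1" | "k = K - 1" "Suc l < K" using False kl by linarith
    then show ?thesis by cases (use mid_out in auto)
  qed
  have union: "X = (\<Union>k<K. C k)"
    by (rule card_le_disjoint_nonempty_subsets(1)[OF fin card sub]) (use ne disj in auto)
  have one: "card (C k) = 1" if "k < K" for k
    by (rule card_le_disjoint_nonempty_subsets(2)[OF fin card sub]) (use ne disj that in auto)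
  show "card X = K"
    by (rule card_le_disjoint_nonempty_subsets(3)[OF fin card sub]) (use ne disj in auto)
  show "card (X \<inter> E) = 1" using one[of "K - 1"] \<open>0 < K\<close> unfolding C_out by simp
  show "card (X \<inter> {z k<..<z (Suc k)}) = 1" if "Suc k < K" for k
    using one[of k] that by (simp add: C_mid)
  show X_sub: "X \<subseteq> E \<union> {z 0<..<z (K - 1)}"
  proof
    fix x assume "x \<in> X"
    then obtain k where "k < K" "x \<in> C k" using union by blast
    then show "x \<in> E \<union> {z 0<..<z (K - 1)}"
    proof (cases "Suc k < K")
      case True
      then show ?thesis using gap_sub[OF True] \<open>x \<in> C k\<close> C_mid[OF True] by auto
    next
      case False
      then have "k = K - 1" using \<open>k < K\<close> by simp
      then show ?thesis using \<open>x \<in> C k\<close> C_out by auto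
    qed
  qed
  have "X = (X \<inter> E) \<union> (X \<inter> {z 0<..<z (K - 1)})" using X_sub by blast
  moreover have "(X \<inter> E) \<inter> (X \<inter> {z 0<..<z (K - 1)}) = {}"
  proof -
    have "{z 0<..<z (K - 1)} \<subseteq> {z 0..z (K - 1)}" by auto
    then show ?thesis using outer(2) by blast
  qed
  ultimately have "card X = card (X \<inter> E) + card (X \<inter> {z 0<..<z (K - 1)})"
    using fin by (metis card_Un_disjoint finite_Int)
  then show "card (X \<inter> {z 0<..<z (K - 1)}) = K - 1"
    using \<open>card X = K\<close> \<open>card (X \<inter> E) = 1\<close> by simp
qed

lemma poly_pos_at_right:
  fixes p :: "real poly"
  assumes "0 < lead_coeff p"
  obtains x where "b < x" "0 < poly p x"
proof -
  obtain m where "\<forall>x\<ge>m. lead_coeff p \<le> poly p x" using poly_pinfty_gt_lc[OF assms] by blast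
  then have "lead_coeff p \<le> poly p (max m (b + 1))" by simp
  then show ?thesis using that[of "max m (b + 1)"] assms by simp
qed

lemma poly_sign_at_left:
  fixes p :: "real poly"
  assumes "0 < lead_coeff p"
  obtains x where "x < b" "0 < (-1) ^ degree p * poly p x"
proof -
  define h where "h = smult ((-1) ^ degree p) (p \<circ>\<^sub>p [:0, -1:])"
  have "lead_coeff h = (-1) ^ degree p * (lead_coeff p * (-1) ^ degree p)"
    by (simp add: h_def lead_coeff_comp)
  also have "\<dots> = lead_coeff p" by (simp flip: power_add)
  finally obtain x where "- b < x" "0 < poly h x" using poly_pos_at_right[of h] assms by metis
  then show ?thesis using that[of "- x"] by (simp add: h_def poly_pcompose)
qed

locale nodes =
  fixes n :: nat and q :: "nat \<Rightarrow> real"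
  assumes q_increasing: "\<And>k. Suc k < n \<Longrightarrow> q k < q (Suc k)"
begin

definition node_poly :: "real poly" where
  "node_poly = (\<Prod>j<n. [:- q j, 1:])"

definition cofactor :: "nat \<Rightarrow> real poly" where
  "cofactor k = (\<Prod>j\<in>{..<n} - {k}. [:- q j, 1:])"

definition pf_poly :: "(nat \<Rightarrow> real) \<Rightarrow> real poly" where
  "pf_poly w = (\<Sum>k<n. smult (w k) (cofactor k))"

lemma poly_node_poly: "poly node_poly a = (\<Prod>j<n. a - q j)"
  by (simp add: node_poly_def poly_prod)

lemma poly_cofactor: "poly (cofactor k) a = (\<Prod>j\<in>{..<n} - {k}. a - q j)"
  by (simp add: cofactor_def poly_prod)

lemma node_poly_split: "k < n \<Longrightarrow> node_poly = [:- q k, 1:] * cofactor k"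
  by (simp add: node_poly_def cofactor_def prod.remove)

lemma poly_node_poly_nonzero: "a \<notin> q ` {..<n} \<Longrightarrow> poly node_poly a \<noteq> 0"
  by (auto simp: poly_node_poly)

lemma degree_cofactor: "k < n \<Longrightarrow> degree (cofactor k) = n - 1"
  unfolding cofactor_def by (subst degree_prod_eq_sum_degree) auto

lemma coeff_cofactor: "k < n \<Longrightarrow> coeff (cofactor k) (n - 1) = 1"
  using degree_cofactor[of k] lead_coeff_prod[of "\<lambda>j. [:- q j, 1:]" "{..<n} - {k}"]
  by (simp add: cofactor_def)

lemma degree_pf_poly: "degree (pf_poly w) \<le> n - 1"
  unfolding pf_poly_def
  by (rule degree_sum_le) (auto intro: order.trans[OF degree_smult_le] simp: degree_cofactor)

lemma coeff_pf_poly: "coeff (pf_poly w) (n - 1) = (\<Sum>k<n. w k)"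
  unfolding pf_poly_def coeff_sum by (rule sum.cong) (use coeff_cofactor in auto)

lemma poly_pf_poly:
  assumes "a \<notin> q ` {..<n}"
  shows "poly (pf_poly w) a = poly node_poly a * (\<Sum>k<n. w k / (a - q k))"
proof -
  have "poly (cofactor k) a = poly node_poly a / (a - q k)" if "k < n" for k
  proof -
    have "a - q k \<noteq> 0" using assms that by auto
    moreover have "poly node_poly a = (a - q k) * poly (cofactor k) a"
      by (simp add: node_poly_split[OF that] algebra_simps)
    ultimately show ?thesis by simp
  qed
  then show ?thesis by (simp add: pf_poly_def poly_sum sum_distrib_left mult.commute)
qed

lemma poly_pf_poly_node:
  assumes "r < n"
  shows "poly (pf_poly w) (q r) = w r * poly (cofactor r) (q r)"
proof -
  have "poly (cofactor k) (q r) = 0" if "k < n" "k \<noteq> r" for k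
    using assms that by (auto simp: poly_cofactor prod_zero_iff)
  then show ?thesis using assms by (simp add: pf_poly_def poly_sum sum.remove)
qed

lemma pf_poly_shift:
  "[:c, 1:] * pf_poly w = pf_poly (\<lambda>k. w k * (c + q k)) + smult (\<Sum>k<n. w k) node_poly"
proof -
  have "[:c, 1:] * smult (w k) (cofactor k) = smult (w k * (c + q k)) (cofactor k) + smult (w k) node_poly"
    if "k < n" for k
    by (rule poly_eq_poly_eq_iff[THEN iffD1])
      (simp add: fun_eq_iff node_poly_split[OF that] algebra_simps)
  then show ?thesis
    by (simp add: pf_poly_def sum_distrib_left smult_sum sum.distrib)
qed

lemma sign_cofactor_node:
  assumes "r < n"
  shows "0 < (-1) ^ (n - 1 - r) * poly (cofactor r) (q r)"
proof -
  have "{j\<in>{..<n} - {r}. r < j} = {r<..<n}" by auto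
  moreover have "0 < (-1) ^ card {j\<in>{..<n} - {r}. r < j} * (\<Prod>j\<in>{..<n} - {r}. q r - q j)"
    by (rule neg_one_power_card_prod_pos)
      (use assms increasing_less[of n q] q_increasing in \<open>auto simp: le_less\<close>)
  ultimately show ?thesis by (simp add: poly_cofactor)
qed

lemma sign_node_poly:
  assumes "r < n" "q r < x" "Suc r < n \<Longrightarrow> x < q (Suc r)"
  shows "0 < (-1) ^ (n - 1 - r) * poly node_poly x"
proof -
  have "{j\<in>{..<n}. r < j} = {r<..<n}" by auto
  moreover have "0 < (-1) ^ card {j\<in>{..<n}. r < j} * (\<Prod>j<n. x - q j)"
  proof (rule neg_one_power_card_prod_pos)
    show "0 < x - q j" if "j \<in> {..<n}" "j \<le> r" for j
      using increasing_le[of n q j r] q_increasing that assms by fastforce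
    show "x - q j < 0" if "j \<in> {..<n}" "r < j" for j
      using increasing_le[of n q "Suc r" j] q_increasing that assms by fastforce
  qed simp
  ultimately show ?thesis by (simp add: poly_node_poly)
qed

end

locale secular = nodes +
  fixes Y :: "nat \<Rightarrow> real"
  assumes two_le_n: "2 \<le> n" and weights_pos: "\<And>k. k < n \<Longrightarrow> 0 < Y k"
begin

definition g :: "real \<Rightarrow> real" where
  "g a = (\<Sum>k<n. Y k / (a - q k))"

definition mass :: real where
  "mass = (\<Sum>k<n. Y k)"

definition F_numer :: "real \<Rightarrow> real poly" where
  "F_numer c = pf_poly (\<lambda>k. Y k * (c + q k))"

definition F :: "real \<Rightarrow> real \<Rightarrow> real" where
  "F R a = (if a \<in> q ` {..<n} then 1 + a * R / 2 else 1 + R / 2 * (a - mass / g a))"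

lemma mass_pos: "0 < mass"
  unfolding mass_def using two_le_n weights_pos by (intro sum_pos) (auto simp: lessThan_empty_iff)

lemma sign_pf_poly_node: "r < n \<Longrightarrow> 0 < (-1) ^ (n - 1 - r) * poly (pf_poly Y) (q r)"
  using sign_cofactor_node[of r] weights_pos[of r]
  by (simp add: poly_pf_poly_node mult.left_commute)

lemma zeros_of_g: "{a. a \<notin> q ` {..<n} \<and> g a = 0} = {a. poly (pf_poly Y) a = 0}"
proof (rule set_eqI, unfold mem_Collect_eq)
  fix a
  show "a \<notin> q ` {..<n} \<and> g a = 0 \<longleftrightarrow> poly (pf_poly Y) a = 0"
  proof (cases "a \<in> q ` {..<n}")
    case True
    then obtain r where "r < n" "a = q r" by blast
    then show ?thesis using sign_pf_poly_node[of r] by auto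
  next
    case False
    then show ?thesis
      using poly_pf_poly[OF False] poly_node_poly_nonzero[OF False] by (simp add: g_def)
  qed
qed

lemma roots_pf_poly_interlace:
  obtains z where "{a. poly (pf_poly Y) a = 0} = z ` {..<n - 1}"
    "\<And>k. Suc k < n \<Longrightarrow> q k < z k \<and> z k < q (Suc k)"
proof -
  have sign_change: "poly (pf_poly Y) (q k) * poly (pf_poly Y) (q (Suc k)) < 0" if "k < n - 1" for k
  proof -
    have "n - 1 - k = Suc (n - 1 - Suc k)" using that by simp
    then have neg: "(-1) ^ (n - 1 - Suc k) * poly (pf_poly Y) (q k) < 0"
      using sign_pf_poly_node[of k] that by simp
    have pos: "0 < (-1) ^ (n - 1 - Suc k) * poly (pf_poly Y) (q (Suc k))"
      using sign_pf_poly_node[of "Suc k"] that by simp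
    from opposite_signs_mult_neg[OF pos neg] show ?thesis by (simp add: mult.commute)
  qed
  obtain z where "{a. poly (pf_poly Y) a = 0} = z ` {..<n - 1}"
    and z: "\<And>k. k < n - 1 \<Longrightarrow> q k < z k \<and> z k < q (Suc k)"
  proof (rule poly_roots_interlace[of "n - 1" "pf_poly Y" q])
    show "0 < n - 1" using two_le_n by simp
    show "degree (pf_poly Y) \<le> n - 1" by (rule degree_pf_poly)
    show "q k < q (Suc k)" if "k < n - 1" for k using q_increasing that by simp
  qed (use sign_change that in auto)
  moreover have "q k < z k \<and> z k < q (Suc k)" if "Suc k < n" for k using z that by simp
  ultimately show ?thesis using that by blast
qed

lemma poly_F_numer: "poly (F_numer c) a = (a + c) * poly (pf_poly Y) a - mass * poly node_poly a"
  using arg_cong[OF pf_poly_shift[of c Y], of "\<lambda>p. poly p a"]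
  by (simp add: F_numer_def mass_def algebra_simps)

lemma sign_F_numer_at_root:
  assumes "r < n" "poly (pf_poly Y) x = 0" "q r < x" "Suc r < n \<Longrightarrow> x < q (Suc r)"
  shows "(-1) ^ (n - 1 - r) * poly (F_numer c) x < 0"
  using sign_node_poly[OF assms(1,3,4)] mass_pos assms(2)
  by (simp add: poly_F_numer mult.left_commute mult_pos_pos)

lemma degree_F_numer: "degree (F_numer c) \<le> n - 1"
  using degree_pf_poly by (simp add: F_numer_def)

lemma coeff_F_numer: "coeff (F_numer c) (n - 1) = (\<Sum>k<n. Y k * (c + q k))"
  using coeff_pf_poly by (simp add: F_numer_def)

lemma zeros_of_F:
  assumes "0 < R"
  shows "{a. (a \<in> q ` {..<n} \<or> g a \<noteq> 0) \<and> F R a = 0} = {a. poly (F_numer (2 / R)) a = 0}"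
proof (rule set_eqI, unfold mem_Collect_eq)
  fix a
  let ?P = "poly (F_numer (2 / R)) a"
  show "(a \<in> q ` {..<n} \<or> g a \<noteq> 0) \<and> F R a = 0 \<longleftrightarrow> ?P = 0"
  proof (cases "a \<in> q ` {..<n}")
    case True
    then obtain r where r: "r < n" "a = q r" by blast
    have "poly node_poly a = 0" using r by (auto simp: poly_node_poly prod_zero_iff)
    then have "?P = (a + 2 / R) * poly (pf_poly Y) a" by (simp add: poly_F_numer)
    moreover have "poly (pf_poly Y) a \<noteq> 0" using sign_pf_poly_node[of r] r by auto
    moreover have "F R a = 0 \<longleftrightarrow> a + 2 / R = 0"
      using True assms by (simp add: F_def field_simps)
    ultimately show ?thesis using True by simp
  next
    case False
    have Q: "poly node_poly a \<noteq> 0" using poly_node_poly_nonzero[OF False] .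
    have P: "?P = poly node_poly a * ((a + 2 / R) * g a - mass)"
      using poly_pf_poly[OF False] by (simp add: poly_F_numer g_def algebra_simps)
    show ?thesis
    proof (cases "g a = 0")
      case True
      then show ?thesis using P Q mass_pos False by simp
    next
      case g_nonzero: False
      have "F R a = R / (2 * g a) * ((a + 2 / R) * g a - mass)"
        using False g_nonzero assms by (simp add: F_def field_simps)
      then show ?thesis using P Q False g_nonzero assms by simp
    qed
  qed
qed

lemma lead_coeff_F_numer:
  assumes "(\<Sum>k<n. Y k * (c + q k)) \<noteq> 0"
  shows "degree (F_numer c) = n - 1" "lead_coeff (F_numer c) = (\<Sum>k<n. Y k * (c + q k))"
proof -
  have "coeff (F_numer c) (n - 1) \<noteq> 0" using coeff_F_numer assms by simp
  then have "n - 1 \<le> degree (F_numer c)" by (rule le_degree)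
  then show "degree (F_numer c) = n - 1" using degree_F_numer[of c] by simp
  then show "lead_coeff (F_numer c) = (\<Sum>k<n. Y k * (c + q k))" using coeff_F_numer by simp
qed

lemma F_numer_root_between:
  assumes "Suc (Suc r) < n" "poly (pf_poly Y) x = 0" "poly (pf_poly Y) x' = 0"
    and "q r < x" "x < q (Suc r)" "q (Suc r) < x'" "x' < q (Suc (Suc r))"
  shows "\<exists>a>x. a < x' \<and> poly (F_numer c) a = 0"
proof -
  have "n - 1 - r = Suc (n - 1 - Suc r)" using assms(1) by simp
  then have "0 < (-1) ^ (n - 1 - Suc r) * poly (F_numer c) x"
    using sign_F_numer_at_root[of r x c] assms by simp
  moreover have "(-1) ^ (n - 1 - Suc r) * poly (F_numer c) x' < 0"
    using sign_F_numer_at_root[of "Suc r" x' c] assms by simp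
  ultimately have "poly (F_numer c) x * poly (F_numer c) x' < 0" by (rule opposite_signs_mult_neg)
  then show ?thesis using poly_IVT[of x x'] assms by simp
qed

lemma F_numer_root_left:
  assumes "0 < (\<Sum>k<n. Y k * (c + q k))" "poly (pf_poly Y) x = 0" "q 0 < x" "x < q 1"
  shows "\<exists>a<x. poly (F_numer c) a = 0"
proof -
  have lc: "0 < lead_coeff (F_numer c)" and deg: "degree (F_numer c) = n - 1"
    using lead_coeff_F_numer[of c] assms(1) by auto
  obtain x' where "x' < x" and pos: "0 < (-1) ^ degree (F_numer c) * poly (F_numer c) x'"
    by (rule poly_sign_at_left[OF lc])
  have "(-1) ^ (n - 1 - 0) * poly (F_numer c) x < 0"
    by (rule sign_F_numer_at_root) (use two_le_n assms(2-4) in auto)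
  then have "poly (F_numer c) x' * poly (F_numer c) x < 0"
    using opposite_signs_mult_neg[of "n - 1"] pos unfolding deg by simp
  then show ?thesis using poly_IVT[OF \<open>x' < x\<close>] by auto
qed

lemma F_numer_root_right:
  assumes "(\<Sum>k<n. Y k * (c + q k)) < 0" "poly (pf_poly Y) x = 0" "q (n - 2) < x" "x < q (n - 1)"
  shows "\<exists>a>x. poly (F_numer c) a = 0"
proof -
  have "0 < lead_coeff (- F_numer c)"
    using lead_coeff_F_numer[of c] assms(1) by (simp add: lead_coeff_minus)
  then obtain x' where "x < x'" and "poly (F_numer c) x' < 0"
    using poly_pos_at_right[of "- F_numer c" x] by auto
  moreover have "0 < poly (F_numer c) x"
  proof -
    have "n - 1 - (n - 2) = 1" "Suc (n - 2) = n - 1" using two_le_n by auto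
    then show ?thesis using sign_F_numer_at_root[of "n - 2" x c] two_le_n assms by simp
  qed
  ultimately have "poly (F_numer c) x * poly (F_numer c) x' < 0" by (simp add: mult_pos_neg)
  then show ?thesis using poly_IVT[OF \<open>x < x'\<close>] by auto
qed

lemma F_numer_roots_interlace:
  fixes c :: real and z :: "nat \<Rightarrow> real"
  defines "FZ \<equiv> {a. poly (F_numer c) a = 0}" and "W \<equiv> (\<Sum>k<n. Y k * (c + q k))"
  defines "E \<equiv> (if 0 < W then {..<z 0} else {z (n - 2)<..})"
  assumes "W \<noteq> 0"
    and z: "\<And>k. Suc k < n \<Longrightarrow> q k < z k \<and> z k < q (Suc k)"
    and z_root: "\<And>k. k < n - 1 \<Longrightarrow> poly (pf_poly Y) (z k) = 0"
  shows "finite FZ" "card FZ = n - 1" "card (FZ \<inter> E) = 1" "FZ \<subseteq> E \<union> {z 0<..<z (n - 2)}"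
    "\<And>k. Suc k < n - 1 \<Longrightarrow> card (FZ \<inter> {z k<..<z (Suc k)}) = 1"
    "card (FZ \<inter> {z 0<..<z (n - 2)}) = n - 2"
proof -
  have z_inc: "z k < z (Suc k)" if "Suc k < n - 1" for k by (rule interlaced_increasing[of n q z, OF z that])
  have "F_numer c \<noteq> 0" using coeff_F_numer[of c] \<open>W \<noteq> 0\<close> by (auto simp: W_def)
  then have fin: "finite FZ" and card: "card FZ \<le> n - 1"
    using poly_roots_finite card_poly_roots_bound[of "F_numer c"] degree_F_numer[of c]
    by (auto simp: FZ_def)
  show "finite FZ" by (fact fin)
  have gaps: "FZ \<inter> {z k<..<z (Suc k)} \<noteq> {}" if "Suc k < n - 1" for k
  proof -
    have "Suc (Suc k) < n" using that by simp
    then obtain a where "z k < a" "a < z (Suc k)" "poly (F_numer c) a = 0"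
      using F_numer_root_between[of k "z k" "z (Suc k)" c] z[of k] z[of "Suc k"]
        z_root[of k] z_root[of "Suc k"] by auto
    then show ?thesis by (auto simp: FZ_def)
  qed
  have "z 0 \<le> z (n - 2)" using increasing_le[of "n - 1" z 0 "n - 2"] z_inc two_le_n by simp
  then have E_outside: "E \<inter> {z 0..z (n - 2)} = {}" by (auto simp: E_def)
  have "FZ \<inter> E \<noteq> {}"
  proof (cases "0 < W")
    case True
    then show ?thesis using F_numer_root_left[of c "z 0"] z[of 0] z_root[of 0] two_le_n
      by (auto simp: E_def FZ_def W_def)
  next
    case False
    then have "W < 0" using \<open>W \<noteq> 0\<close> by simp
    moreover have "Suc (n - 2) = n - 1" using two_le_n by simp
    ultimately show ?thesis using F_numer_root_right[of c "z (n - 2)"] z[of "n - 2"] z_root[of "n - 2"]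
      two_le_n by (auto simp: E_def FZ_def W_def)
  qed
  have n2: "n - 1 - 1 = n - 2" by simp
  note counts = card_one_per_gap_and_outside[of FZ "n - 1" z E, unfolded n2,
      OF fin card z_inc gaps \<open>FZ \<inter> E \<noteq> {}\<close> E_outside]
  show "card FZ = n - 1" "card (FZ \<inter> E) = 1" "FZ \<subseteq> E \<union> {z 0<..<z (n - 2)}"
    "\<And>k. Suc k < n - 1 \<Longrightarrow> card (FZ \<inter> {z k<..<z (Suc k)}) = 1"
    "card (FZ \<inter> {z 0<..<z (n - 2)}) = n - 2"
    using counts by simp_all
qed

theorem zero_structure:
  fixes c :: real
  defines "Z \<equiv> {a. poly (pf_poly Y) a = 0}" and "FZ \<equiv> {a. poly (F_numer c) a = 0}"
    and "W \<equiv> (\<Sum>k<n. Y k * (c + q k))"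
  assumes "W \<noteq> 0"
  shows "finite FZ \<and> card FZ = n - 1
    \<and> finite Z \<and> Z \<noteq> {}
    \<and> card (FZ \<inter> {Min Z<..<Max Z}) = n - 2
    \<and> (\<forall>s\<in>Z. \<forall>t\<in>Z. s < t \<and> (\<forall>u\<in>Z. \<not> (s < u \<and> u < t))
          \<longrightarrow> card (FZ \<inter> {s<..<t}) = 1)
    \<and> (W > 0 \<longrightarrow> card (FZ \<inter> {..<Min Z}) = 1 \<and> FZ \<inter> {Max Z<..} = {})
    \<and> (W < 0 \<longrightarrow> card (FZ \<inter> {Max Z<..}) = 1 \<and> FZ \<inter> {..<Min Z} = {})"
proof -
  obtain z where Z: "Z = z ` {..<n - 1}" and z: "\<And>k. Suc k < n \<Longrightarrow> q k < z k \<and> z k < q (Suc k)"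
    using roots_pf_poly_interlace unfolding Z_def by blast
  have z_inc: "z k < z (Suc k)" if "Suc k < n - 1" for k by (rule interlaced_increasing[of n q z, OF z that])
  have "poly (pf_poly Y) (z k) = 0" if "k < n - 1" for k using Z that by (auto simp: Z_def)
  note counts = F_numer_roots_interlace[OF \<open>W \<noteq> 0\<close>[unfolded W_def] z this, folded FZ_def W_def]
  have n2: "n - 1 - 1 = n - 2" by simp
  have Min: "Min Z = z 0" and Max: "Max Z = z (n - 2)"
    using Min_Max_image_increasing[of "n - 1" z, unfolded n2] z_inc two_le_n unfolding Z by auto
  have adjacent: "card (FZ \<inter> {s<..<t}) = 1"
    if "s \<in> Z" "t \<in> Z" "s < t" "\<forall>u\<in>Z. \<not> (s < u \<and> u < t)" for s t
    using adjacent_in_image_increasing[of "n - 1" z s t] z_inc that counts(5) unfolding Z by metis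
  show ?thesis
    using counts Min Max adjacent two_le_n unfolding Z by (auto simp: lessThan_empty_iff)
qed

end

lemma finite_increasing_enumeration:
  fixes S :: "'a :: linorder set"
  assumes "finite S"
  obtains \<sigma> where "bij_betw \<sigma> {..<card S} S" "\<And>i j. i < j \<Longrightarrow> j < card S \<Longrightarrow> \<sigma> i < \<sigma> j"
proof
  let ?L = "sorted_list_of_set S"
  show "bij_betw ((!) ?L) {..<card S} S"
    by (rule bij_betw_nth) (use assms in simp_all)
  show "?L ! i < ?L ! j" if "i < j" "j < card S" for i j
    using sorted_wrt_nth_less[OF strict_sorted_list_of_set that(1)] that(2) by simp
qed

lemma tiling_offsets:
  fixes dx d :: "nat \<Rightarrow> real"
  assumes dx: "\<forall>i\<in>{1..N}. 0 < dx i" and d: "\<forall>i\<in>{1..N}. d i = (\<Sum>j=1..<i. dx j) + dx i / 2"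
  shows tiling_offset_pos: "i \<in> {1..N} \<Longrightarrow> 0 < d i"
    and tiling_offset_less: "i \<in> {1..N} \<Longrightarrow> j \<in> {1..N} \<Longrightarrow> i < j \<Longrightarrow> d i < d j"
proof -
  have nonneg: "0 \<le> (\<Sum>j=a..<b. dx j)" if "1 \<le> a" "b \<le> Suc N" for a b
    using dx that by (intro sum_nonneg) (simp add: less_imp_le)
  show "0 < d i" if "i \<in> {1..N}"
  proof -
    have "0 < dx i" "d i = (\<Sum>j=1..<i. dx j) + dx i / 2" using dx d that by auto
    then show ?thesis using nonneg[of 1 i] that by simp
  qed
  show "d i < d j" if "i \<in> {1..N}" "j \<in> {1..N}" "i < j"
  proof -
    have "(\<Sum>k=1..<j. dx k) = (\<Sum>k=1..<i. dx k) + (\<Sum>k=i..<j. dx k)"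
      using that by (simp add: sum.atLeastLessThan_concat)
    also have "(\<Sum>k=i..<j. dx k) = dx i + (\<Sum>k=Suc i..<j. dx k)"
      using that by (simp add: sum.atLeast_Suc_lessThan)
    finally have "(\<Sum>k=1..<j. dx k) = (\<Sum>k=1..<i. dx k) + dx i + (\<Sum>k=Suc i..<j. dx k)"
      by simp
    moreover have "0 < dx i" "0 < dx j" using dx that by auto
    moreover have "d i = (\<Sum>k=1..<i. dx k) + dx i / 2" "d j = (\<Sum>k=1..<j. dx k) + dx j / 2"
      using d that by auto
    ultimately show ?thesis using nonneg[of "Suc i" j] that by simp
  qed
qed

lemma partial_fraction_term: "(d::real) \<noteq> 0 \<Longrightarrow> w * d / (1 + a * d) = w / (a + 1 / d)"
  by (cases "1 + a * d = 0") (simp_all add: field_simps)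

lemma occupied_bins_enumeration:
  fixes N :: nat and y :: "nat \<Rightarrow> nat"
  defines "n \<equiv> ncount N y"
  obtains \<sigma> where "\<And>k. k < n \<Longrightarrow> \<sigma> k \<in> {1..N} \<and> 1 \<le> y (\<sigma> k)"
    "\<And>i j. i < j \<Longrightarrow> j < n \<Longrightarrow> \<sigma> i < \<sigma> j"
    "{i\<in>{1..N}. 1 \<le> y i} = \<sigma> ` {..<n}"
    "\<And>f :: nat \<Rightarrow> real. (\<And>i. y i = 0 \<Longrightarrow> f i = 0) \<Longrightarrow> (\<Sum>i=1..N. f i) = (\<Sum>k<n. f (\<sigma> k))"
proof -
  define S where "S = {i\<in>{1..N}. 1 \<le> y i}"
  have "finite S" by (simp add: S_def)
  then obtain \<sigma> where bij: "bij_betw \<sigma> {..<n} S" and "\<And>i j. i < j \<Longrightarrow> j < n \<Longrightarrow> \<sigma> i < \<sigma> j"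
    unfolding n_def ncount_def S_def[symmetric] by (rule finite_increasing_enumeration) blast
  moreover have "\<sigma> k \<in> {1..N} \<and> 1 \<le> y (\<sigma> k)" if "k < n" for k
    using bij_betwE[OF bij] that by (auto simp: S_def)
  moreover have "(\<Sum>i=1..N. f i) = (\<Sum>k<n. f (\<sigma> k))"
    if f0: "\<And>i. y i = 0 \<Longrightarrow> f i = 0" for f :: "nat \<Rightarrow> real"
  proof -
    have "f i = 0" if "i \<in> {1..N} - S" for i
    proof -
      have "y i = 0" using that by (auto simp: S_def)
      then show ?thesis by (rule f0)
    qed
    then have "(\<Sum>i=1..N. f i) = (\<Sum>i\<in>S. f i)"
      by (intro sum.mono_neutral_right) (auto simp: S_def)
    also have "\<dots> = (\<Sum>k<n. f (\<sigma> k))" by (rule sum.reindex_bij_betw[symmetric, OF bij])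
    finally show ?thesis .
  qed
  moreover have "S = \<sigma> ` {..<n}" using bij by (simp add: bij_betw_def)
  ultimately show ?thesis using that unfolding S_def by blast
qed

lemma bins_secular:
  fixes N :: nat and dx d :: "nat \<Rightarrow> real" and y :: "nat \<Rightarrow> nat"
  defines "n \<equiv> ncount N y"
  assumes dx: "\<forall>i\<in>{1..N}. 0 < dx i" and d: "\<forall>i\<in>{1..N}. d i = (\<Sum>j=1..<i. dx j) + dx i / 2"
    and "2 \<le> n"
  obtains q Y where "secular n q Y"
    "\<And>a. gfun N d y a = (\<Sum>k<n. Y k / (a - q k))"
    "\<And>a. is_pole N d y a \<longleftrightarrow> a \<in> q ` {..<n}"
    "Mtot N y = (\<Sum>k<n. Y k)"
    "(\<Sum>i=1..N. real (y i) / d i) = - (\<Sum>k<n. Y k * q k)"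
proof -
  obtain \<sigma> where \<sigma>: "\<And>k. k < n \<Longrightarrow> \<sigma> k \<in> {1..N} \<and> 1 \<le> y (\<sigma> k)"
    and \<sigma>_less: "\<And>i j. i < j \<Longrightarrow> j < n \<Longrightarrow> \<sigma> i < \<sigma> j"
    and occupied: "{i\<in>{1..N}. 1 \<le> y i} = \<sigma> ` {..<n}"
    and reindex: "\<And>f :: nat \<Rightarrow> real. (\<And>i. y i = 0 \<Longrightarrow> f i = 0) \<Longrightarrow> (\<Sum>i=1..N. f i) = (\<Sum>k<n. f (\<sigma> k))"
    unfolding n_def by (rule occupied_bins_enumeration[of N y]) blast
  define q where "q k = - 1 / d (\<sigma> k)" for k
  define Y where "Y k = real (y (\<sigma> k))" for k
  have d_pos: "0 < d (\<sigma> k)" if "k < n" for k using tiling_offset_pos[OF dx d] \<sigma>[OF that] by blast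
  show ?thesis
  proof
    show "secular n q Y"
    proof
      show "q k < q (Suc k)" if "Suc k < n" for k
      proof -
        have "d (\<sigma> k) < d (\<sigma> (Suc k))"
          using tiling_offset_less[OF dx d] \<sigma>[of k] \<sigma>[of "Suc k"] \<sigma>_less[of k "Suc k"] that by simp
        then show ?thesis using d_pos[of k] d_pos[of "Suc k"] that by (simp add: q_def field_simps)
      qed
      show "0 < Y k" if "k < n" for k using \<sigma>[OF that] by (simp add: Y_def)
    qed fact
    show "gfun N d y a = (\<Sum>k<n. Y k / (a - q k))" for a
    proof -
      have "gfun N d y a = (\<Sum>k<n. real (y (\<sigma> k)) * d (\<sigma> k) / (1 + a * d (\<sigma> k)))"
        unfolding gfun_def by (rule reindex) simp
      also have "\<dots> = (\<Sum>k<n. Y k / (a - q k))"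
      proof (rule sum.cong[OF refl])
        fix k assume "k \<in> {..<n}"
        then have "d (\<sigma> k) \<noteq> 0" using d_pos by force
        then show "real (y (\<sigma> k)) * d (\<sigma> k) / (1 + a * d (\<sigma> k)) = Y k / (a - q k)"
          by (simp add: Y_def q_def partial_fraction_term)
      qed
      finally show ?thesis .
    qed
    show "is_pole N d y a \<longleftrightarrow> a \<in> q ` {..<n}" for a
    proof -
      have "is_pole N d y a \<longleftrightarrow> (\<exists>i\<in>{i\<in>{1..N}. 1 \<le> y i}. a = - 1 / d i)"
        unfolding is_pole_def by auto
      also have "\<dots> \<longleftrightarrow> a \<in> q ` {..<n}" unfolding occupied q_def by auto
      finally show ?thesis .
    qed
    show "Mtot N y = (\<Sum>k<n. Y k)"
      unfolding Mtot_def Y_def by (rule reindex) simp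
    have "(\<Sum>i=1..N. real (y i) / d i) = (\<Sum>k<n. real (y (\<sigma> k)) / d (\<sigma> k))"
      by (rule reindex) simp
    then show "(\<Sum>i=1..N. real (y i) / d i) = - (\<Sum>k<n. Y k * q k)"
      by (simp add: Y_def q_def sum_negf[symmetric])
  qed
qed

theorem mainTheorem6:
  fixes N :: nat and xA xB :: real and dx x :: "nat \<Rightarrow> real" and y :: "nat \<Rightarrow> nat"
  defines "R \<equiv> xB - xA"
  defines "d \<equiv> (\<lambda>i. x i - xA)"
  defines "Z \<equiv> g_zeros N d y"
  defines "FZ \<equiv> F_zeros R N d y"
  assumes hN: "N \<ge> 2"
    and hAB: "xA < xB"
    and hdx: "\<forall>i\<in>{1..N}. dx i > 0"
    and htile_sum: "(\<Sum>i=1..N. dx i) = R"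
    and hcentres: "\<forall>i\<in>{1..N}. x i = xA + (\<Sum>j=1..<i. dx j) + dx i / 2"
    and hn: "ncount N y \<ge> 2"
    and hFinf: "F_inf R N d y \<noteq> 0"
  shows "finite FZ \<and> card FZ = ncount N y - 1
    \<and> finite Z \<and> Z \<noteq> {}
    \<and> card (FZ \<inter> {Min Z<..<Max Z}) = ncount N y - 2
    \<and> (\<forall>s\<in>Z. \<forall>t\<in>Z. s < t \<and> (\<forall>u\<in>Z. \<not> (s < u \<and> u < t))
          \<longrightarrow> card (FZ \<inter> {s<..<t}) = 1)
    \<and> (F_inf R N d y > 0 \<longrightarrow> card (FZ \<inter> {..<Min Z}) = 1 \<and> FZ \<inter> {Max Z<..} = {})
    \<and> (F_inf R N d y < 0 \<longrightarrow> card (FZ \<inter> {Max Z<..}) = 1 \<and> FZ \<inter> {..<Min Z} = {})"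
proof -
  have R_pos: "0 < R" using hAB by (simp add: R_def)
  have d_tiling: "\<forall>i\<in>{1..N}. d i = (\<Sum>j=1..<i. dx j) + dx i / 2" using hcentres by (simp add: d_def)
  obtain q Y where "secular (ncount N y) q Y"
    and g: "\<And>a. gfun N d y a = (\<Sum>k<ncount N y. Y k / (a - q k))"
    and pole: "\<And>a. is_pole N d y a \<longleftrightarrow> a \<in> q ` {..<ncount N y}"
    and M: "Mtot N y = (\<Sum>k<ncount N y. Y k)"
    and inverse_sum: "(\<Sum>i=1..N. real (y i) / d i) = - (\<Sum>k<ncount N y. Y k * q k)"
    by (rule bins_secular[OF hdx d_tiling hn]) blast
  then interpret secular "ncount N y" q Y by simp
  have gfun_eq_g: "gfun N d y = g" by (simp add: fun_eq_iff g g_def)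
  have Z: "Z = {a. poly (pf_poly Y) a = 0}"
    unfolding Z_def g_zeros_def gfun_eq_g pole zeros_of_g ..
  have FZ: "FZ = {a. poly (F_numer (2 / R)) a = 0}"
    unfolding zeros_of_F[OF R_pos, symmetric] FZ_def F_zeros_def F_dom_def Ffun_def
      gfun_eq_g pole M mass_def[symmetric] F_def ..
  define W where "W = (\<Sum>k<ncount N y. Y k * (2 / R + q k))"
  have "W = 2 / R * mass + (\<Sum>k<ncount N y. Y k * q k)"
    unfolding W_def mass_def by (simp add: algebra_simps sum.distrib sum_distrib_left)
  then have "F_inf R N d y = R / (2 * mass) * W"
    unfolding F_inf_def M inverse_sum mass_def[symmetric] using R_pos mass_pos by (simp add: field_simps)
  moreover have "0 < R / (2 * mass)" using R_pos mass_pos by simp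
  ultimately have "W \<noteq> 0" "F_inf R N d y > 0 \<longleftrightarrow> W > 0" "F_inf R N d y < 0 \<longleftrightarrow> W < 0"
    using hFinf by (auto simp only: zero_less_mult_iff mult_less_0_iff mult_eq_0_iff)
  then show ?thesis using zero_structure[of "2 / R"] unfolding Z FZ W_def by simp
qed

end
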